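(* Let $t\ge2$ and let $p$ be a distribution on $\mathbb{R}^d$ with finite moments of order $2t$ and mean $\mu$, with $M_j=\mathbb{E}_{x\sim p}[(x-\mu)^{\otimes j}]$ ($M_0=1$). For every collection of non-negative integers $i_0,\dots,i_r$ with $i_0+\cdots+i_r=2t$ and $i_s\le 2t-2$ for all $s$, $$\langle M_{i_0}\otimes\cdots\otimes M_{i_r},v^{\otimes 2t}\rangle\preceq_{2t}\langle M_2\otimes M_{2t-2},v^{\otimes 2t}\rangle.$$
   Context: For polynomials $a(v),b(v)$ in $v\in\mathbb{R}^d$, $a(v)\preceq_{2t} b(v)$ means there is a polynomial $r(v)$ of degree at most $2t-2$ such that $b(v)-a(v)-r(v)(\|v\|_2^2-1)$ is a sum of squares of polynomials of degree at most $t$. For an order-$m$ tensor $T$, $\langle T,v^{\otimes m}\rangle$ is the associated degree-$m$ polynomial in $v$; note $\langle M_a\otimes M_b, v^{\otimes(a+b)}\rangle=\langle M_a,v^{\otimes a}\rangle\langle M_b,v^{\otimes b}\rangle$. *)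

theory Defs
  imports "HOL-Probability.Probability"
begin

definition poly_deg_le :: "nat \<Rightarrow> (real^'d \<Rightarrow> real) \<Rightarrow> bool" where
  "poly_deg_le k f \<longleftrightarrow>
     (\<exists>(S :: ('d \<Rightarrow> nat) set) c. finite S \<and> (\<forall>\<alpha>\<in>S. (\<Sum>i\<in>UNIV. \<alpha> i) \<le> k) \<and>
        (\<forall>v. f v = (\<Sum>\<alpha>\<in>S. c \<alpha> * (\<Prod>i\<in>UNIV. (v $ i) ^ (\<alpha> i)))))"

text \<open>sos_le_2t t a b  is  a \<preceq>_{2t} b: there is a polynomial r of degree at most 2t-2
  such that b - a - r (|v|^2 - 1) is a sum of squares of polynomials of degree at most t.\<close>
definition sos_le_2t :: "nat \<Rightarrow> (real^'d \<Rightarrow> real) \<Rightarrow> (real^'d \<Rightarrow> real) \<Rightarrow> bool" where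
  "sos_le_2t t a b \<longleftrightarrow>
     (\<exists>r. poly_deg_le (2*t - 2) r \<and>
        (\<exists>qs. (\<forall>q\<in>set qs. poly_deg_le t q) \<and>
           (\<forall>v. b v - a v - r v * ((norm v)^2 - 1) = (\<Sum>q\<leftarrow>qs. (q v)^2))))"

text \<open>Order-m tensors over R^d are functions from index lists of length m to reals.\<close>
definition tensor_poly :: "nat \<Rightarrow> ('d::finite list \<Rightarrow> real) \<Rightarrow> real^'d \<Rightarrow> real" where
  "tensor_poly m T v = (\<Sum>is\<in>{is. set is \<subseteq> UNIV \<and> length is = m}.
                          T is * (\<Prod>k<m. v $ (is ! k)))"

fun tensor_prod_list :: "(nat \<times> ('d list \<Rightarrow> real)) list \<Rightarrow> ('d list \<Rightarrow> real)" where
  "tensor_prod_list [] = (\<lambda>_. 1)"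
| "tensor_prod_list ((m, T) # rest) = (\<lambda>is. T (take m is) * tensor_prod_list rest (drop m is))"

definition mean_vec :: "(real^'d) measure \<Rightarrow> real^'d" where
  "mean_vec p = integral\<^sup>L p (\<lambda>x. x)"

definition moment_tensor :: "(real^'d) measure \<Rightarrow> nat \<Rightarrow> ('d list \<Rightarrow> real)" where
  "moment_tensor p j = (\<lambda>is. integral\<^sup>L p (\<lambda>x. \<Prod>k<j. (x - mean_vec p) $ (is ! k)))"

end

theory Submission
  imports Defs
begin

text \<open>Write \<open>Y = \<langle>x - \<mu>, v\<rangle>\<close>. Then \<open>\<langle>M_j, v^\<otimes>j\<rangle> = E[Y^j]\<close>, and
  \<open>\<langle>M_i0 \<otimes> \<dots> \<otimes> M_ir, v^\<otimes>2t\<rangle>\<close> is the expectation of \<open>\<Prod>_s Y_s^i_s\<close> over independent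
  copies \<open>Y_0, \<dots>, Y_r\<close>. The expectation of the square of a polynomial in \<open>v\<close> with
  square-integrable random coefficients is a sum of squares in \<open>v\<close>, because its Gram matrix is
  positive semidefinite. Splitting every \<open>i_s = a_s + b_s\<close> with \<open>\<Sum>a = \<Sum>b = t\<close> and all parts at
  most \<open>t - 1\<close>, the inequality \<open>E[(\<Prod>_s Y_s^a_s - \<Prod>_s Y_s^b_s)^2] \<ge> 0\<close> bounds the product by
  the mean of the even products \<open>\<Prod>_s M_2a_s\<close> and \<open>\<Prod>_s M_2b_s\<close>. For even moments the same
  argument shows that the second differences of \<open>j \<mapsto> M_2j M_2(n-j)\<close> are sums of squares, so
  moving a unit from a smaller exponent to the largest one increases the product; this ends at
  \<open>M_2 M_2t-2\<close>. No multiple of \<open>\<parallel>v\<parallel>^2 - 1\<close> is needed.\<close>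

section \<open>Polynomials of bounded degree\<close>

lemma poly_deg_le_sumI:
  fixes f :: "real^'d \<Rightarrow> real" and \<alpha> :: "'j \<Rightarrow> 'd \<Rightarrow> nat"
  assumes "finite J" "\<forall>j\<in>J. (\<Sum>i\<in>UNIV. \<alpha> j i) \<le> k"
    "\<forall>v. f v = (\<Sum>j\<in>J. e j * (\<Prod>i\<in>UNIV. (v $ i) ^ (\<alpha> j i)))"
  shows "poly_deg_le k f"
  unfolding poly_deg_le_def
proof (intro exI conjI allI)
  show "finite (\<alpha> ` J)" using assms by auto
  show "\<forall>\<beta>\<in>\<alpha> ` J. (\<Sum>i\<in>UNIV. \<beta> i) \<le> k" using assms by auto
  fix v
  have "(\<Sum>\<beta>\<in>\<alpha> ` J. (\<Sum>j\<in>{j\<in>J. \<alpha> j = \<beta>}. e j) * (\<Prod>i\<in>UNIV. (v $ i) ^ (\<beta> i)))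
      = (\<Sum>\<beta>\<in>\<alpha> ` J. (\<Sum>j\<in>{j\<in>J. \<alpha> j = \<beta>}. e j * (\<Prod>i\<in>UNIV. (v $ i) ^ (\<alpha> j i))))"
    by (auto simp: sum_distrib_right intro!: sum.cong)
  also have "\<dots> = (\<Sum>j\<in>J. e j * (\<Prod>i\<in>UNIV. (v $ i) ^ (\<alpha> j i)))"
    using assms(1) by (intro sum.group) auto
  finally show "f v = (\<Sum>\<beta>\<in>\<alpha> ` J. (\<Sum>j\<in>{j\<in>J. \<alpha> j = \<beta>}. e j) * (\<Prod>i\<in>UNIV. (v $ i) ^ (\<beta> i)))"
    using assms(3) by simp
qed

lemma poly_deg_le_add:
  assumes "poly_deg_le k f" "poly_deg_le k g"
  shows "poly_deg_le k (\<lambda>v. f v + g v)"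
proof -
  obtain S c where S: "finite S" "\<forall>\<alpha>\<in>S. (\<Sum>i\<in>UNIV. \<alpha> i) \<le> k"
     "\<forall>v. f v = (\<Sum>\<alpha>\<in>S. c \<alpha> * (\<Prod>i\<in>UNIV. (v $ i) ^ (\<alpha> i)))"
    using assms(1) unfolding poly_deg_le_def by blast
  obtain S' c' where S': "finite S'" "\<forall>\<alpha>\<in>S'. (\<Sum>i\<in>UNIV. \<alpha> i) \<le> k"
     "\<forall>v. g v = (\<Sum>\<alpha>\<in>S'. c' \<alpha> * (\<Prod>i\<in>UNIV. (v $ i) ^ (\<alpha> i)))"
    using assms(2) unfolding poly_deg_le_def by blast
  show ?thesis
    by (rule poly_deg_le_sumI[where J="S <+> S'" and \<alpha>="case_sum id id" and e="case_sum c c'"])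
      (use S S' in \<open>auto simp: sum.Plus comp_def\<close>)
qed

lemma poly_deg_le_cmult:
  assumes "poly_deg_le k f"
  shows "poly_deg_le k (\<lambda>v. a * f v)"
proof -
  obtain S c where S: "finite S" "\<forall>\<alpha>\<in>S. (\<Sum>i\<in>UNIV. \<alpha> i) \<le> k"
     "\<forall>v. f v = (\<Sum>\<alpha>\<in>S. c \<alpha> * (\<Prod>i\<in>UNIV. (v $ i) ^ (\<alpha> i)))"
    using assms(1) unfolding poly_deg_le_def by blast
  show ?thesis
    by (rule poly_deg_le_sumI[where J="S" and \<alpha>="id" and e="\<lambda>\<alpha>. a * c \<alpha>"])
      (use S in \<open>auto simp: sum_distrib_left mult.assoc\<close>)
qed

lemma poly_deg_le_mult:
  assumes "poly_deg_le k f" "poly_deg_le k' g"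
  shows "poly_deg_le (k + k') (\<lambda>v. f v * g v)"
proof -
  obtain S c where S: "finite S" "\<forall>\<alpha>\<in>S. (\<Sum>i\<in>UNIV. \<alpha> i) \<le> k"
     "\<forall>v. f v = (\<Sum>\<alpha>\<in>S. c \<alpha> * (\<Prod>i\<in>UNIV. (v $ i) ^ (\<alpha> i)))"
    using assms(1) unfolding poly_deg_le_def by blast
  obtain S' c' where S': "finite S'" "\<forall>\<alpha>\<in>S'. (\<Sum>i\<in>UNIV. \<alpha> i) \<le> k'"
     "\<forall>v. g v = (\<Sum>\<alpha>\<in>S'. c' \<alpha> * (\<Prod>i\<in>UNIV. (v $ i) ^ (\<alpha> i)))"
    using assms(2) unfolding poly_deg_le_def by blast
  show ?thesis
  proof (rule poly_deg_le_sumI[where J="S \<times> S'" and \<alpha>="\<lambda>(\<beta>,\<gamma>) i. \<beta> i + \<gamma> i"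
        and e="\<lambda>(\<beta>,\<gamma>). c \<beta> * c' \<gamma>"])
    show "finite (S \<times> S')" using S S' by auto
    show "\<forall>j\<in>S \<times> S'. (\<Sum>i\<in>UNIV. (case j of (\<beta>, \<gamma>) \<Rightarrow> \<lambda>i. \<beta> i + \<gamma> i) i) \<le> k + k'"
      using S S' by (auto simp: sum.distrib add_mono)
    show "\<forall>v. f v * g v = (\<Sum>j\<in>S \<times> S'. (case j of (\<beta>, \<gamma>) \<Rightarrow> c \<beta> * c' \<gamma>) *
             (\<Prod>i\<in>UNIV. v $ i ^ (case j of (\<beta>, \<gamma>) \<Rightarrow> \<lambda>i. \<beta> i + \<gamma> i) i))"
      using S S' by (auto simp: sum_product sum.cartesian_product power_add prod.distrib
          intro!: sum.cong)
  qed
qed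

lemma poly_deg_le_const: "poly_deg_le k (\<lambda>v::real^'d. a)"
  by (rule poly_deg_le_sumI[where J="{()}" and \<alpha>="\<lambda>_ _. 0" and e="\<lambda>_. a"]) auto

lemma poly_deg_le_component: "poly_deg_le 1 (\<lambda>v::real^'d. v $ i)"
proof (rule poly_deg_le_sumI[where J="{()}" and \<alpha>="\<lambda>_ j. if j = i then 1 else 0" and e="\<lambda>_. 1"])
  show "\<forall>v::real^'d. v $ i = (\<Sum>j\<in>{()}. 1 * (\<Prod>l\<in>UNIV. v $ l ^ (if l = i then 1 else 0)))"
  proof
    fix v :: "real^'d"
    have "(\<Prod>l\<in>UNIV. v $ l ^ (if l = i then 1 else 0)) = (\<Prod>l\<in>UNIV. if l = i then v $ l else 1)"
      by (intro prod.cong) auto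
    then show "v $ i = (\<Sum>j\<in>{()}. 1 * (\<Prod>l\<in>UNIV. v $ l ^ (if l = i then 1 else 0)))"
      by (simp add: prod.delta)
  qed
qed auto

lemma poly_deg_le_sum:
  assumes "finite A" "\<forall>x\<in>A. poly_deg_le k (f x)"
  shows "poly_deg_le k (\<lambda>v. \<Sum>x\<in>A. f x v)"
  using assms by (induction A rule: finite_induct) (auto simp: poly_deg_le_const intro!: poly_deg_le_add)

lemma poly_deg_le_prod:
  assumes "finite A" "\<forall>x\<in>A. poly_deg_le (d x) (f x)"
  shows "poly_deg_le (\<Sum>x\<in>A. d x) (\<lambda>v. \<Prod>x\<in>A. f x v)"
  using assms by (induction A rule: finite_induct) (auto simp: poly_deg_le_const intro!: poly_deg_le_mult)

section \<open>Sums of squares\<close>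

definition sos :: "nat \<Rightarrow> (real^'d \<Rightarrow> real) \<Rightarrow> bool" where
  "sos n f \<longleftrightarrow> (\<exists>qs. (\<forall>q\<in>set qs. poly_deg_le n q) \<and> (\<forall>v. f v = (\<Sum>q\<leftarrow>qs. (q v)^2)))"

lemma sos_le_2tI: "sos t (\<lambda>v. b v - a v) \<Longrightarrow> sos_le_2t t a b"
  unfolding sos_le_2t_def sos_def by (intro exI[of _ "\<lambda>_. 0"]) (simp add: poly_deg_le_const)

lemma sos_zero: "sos n (\<lambda>v. 0)"
  unfolding sos_def by (rule exI[of _ "[]"]) auto

lemma sos_cong: "sos n f \<Longrightarrow> (\<And>v. f v = g v) \<Longrightarrow> sos n g"
  unfolding sos_def by metis

lemma sos_add: "sos n f \<Longrightarrow> sos n g \<Longrightarrow> sos n (\<lambda>v. f v + g v)"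
  unfolding sos_def
  apply (elim exE conjE)
  subgoal for qs rs by (rule exI[of _ "qs @ rs"]) auto
  done

lemma sos_square: "poly_deg_le n q \<Longrightarrow> sos n (\<lambda>v. (q v)^2)"
  unfolding sos_def by (rule exI[of _ "[q]"]) auto

lemma sos_cmult:
  assumes "sos n f" "0 \<le> c"
  shows "sos n (\<lambda>v. c * f v)"
proof -
  obtain qs where qs: "\<forall>q\<in>set qs. poly_deg_le n q" "\<forall>v. f v = (\<Sum>q\<leftarrow>qs. (q v)^2)"
    using assms unfolding sos_def by blast
  show ?thesis unfolding sos_def
  proof (rule exI[of _ "map (\<lambda>q v. sqrt c * q v) qs"], intro conjI allI)
    show "\<forall>q\<in>set (map (\<lambda>q v. sqrt c * q v) qs). poly_deg_le n q"
      using qs by (auto intro: poly_deg_le_cmult)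
    fix v
    have "c * f v = (\<Sum>q\<leftarrow>qs. c * (q v)^2)" using qs by (simp add: sum_list_const_mult)
    also have "\<dots> = (\<Sum>q\<leftarrow>map (\<lambda>q v. sqrt c * q v) qs. (q v)^2)"
      using assms(2) by (simp add: comp_def power_mult_distrib)
    finally show "c * f v = (\<Sum>q\<leftarrow>map (\<lambda>q v. sqrt c * q v) qs. (q v)^2)" .
  qed
qed

lemma sos_sum:
  assumes "finite A" "\<forall>x\<in>A. sos n (f x)"
  shows "sos n (\<lambda>v. \<Sum>x\<in>A. f x v)"
  using assms by (induction A rule: finite_induct) (auto simp: sos_zero intro!: sos_add)

lemma sos_square_mult:
  assumes "poly_deg_le a q" "sos b g"
  shows "sos (a + b) (\<lambda>v. (q v)^2 * g v)"
proof -
  obtain rs where rs: "\<forall>r\<in>set rs. poly_deg_le b r" "\<forall>v. g v = (\<Sum>r\<leftarrow>rs. (r v)^2)"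
    using assms(2) unfolding sos_def by blast
  have "sos (a + b) (\<lambda>v. \<Sum>r\<leftarrow>rs. (q v * r v)^2)"
    unfolding sos_def using rs(1) assms(1)
    by (intro exI[of _ "map (\<lambda>r v. q v * r v) rs"]) (auto intro: poly_deg_le_mult simp: comp_def)
  then show ?thesis
    by (rule sos_cong) (simp add: rs(2) power_mult_distrib sum_list_const_mult)
qed

lemma sos_mult:
  assumes "sos a f" "sos b g"
  shows "sos (a + b) (\<lambda>v. f v * g v)"
proof -
  obtain qs where qs: "\<forall>q\<in>set qs. poly_deg_le a q" "\<forall>v. f v = (\<Sum>q\<leftarrow>qs. (q v)^2)"
    using assms(1) unfolding sos_def by blast
  have "sos (a + b) (\<lambda>v. (\<Sum>q\<leftarrow>qs. (q v)^2) * g v)"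
    using qs(1)
  proof (induction qs)
    case Nil
    then show ?case by (simp add: sos_zero)
  next
    case (Cons q qs)
    then have "sos (a + b) (\<lambda>v. (q v)^2 * g v + (\<Sum>q\<leftarrow>qs. (q v)^2) * g v)"
      using assms(2) by (intro sos_add sos_square_mult) auto
    then show ?case by (rule sos_cong) (simp add: algebra_simps)
  qed
  then show ?thesis by (rule sos_cong) (simp add: qs(2))
qed

lemma sos_one: "sos n (\<lambda>v. 1)"
  using sos_square[OF poly_deg_le_const[of n 1]] by simp

lemma sos_prod:
  assumes "finite A" "\<forall>x\<in>A. sos (d x) (f x)"
  shows "sos (\<Sum>x\<in>A. d x) (\<lambda>v. \<Prod>x\<in>A. f x v)"
  using assms by (induction A rule: finite_induct) (auto simp: sos_one intro!: sos_mult)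

section \<open>Positive semidefinite Gram matrices\<close>

definition quad_form :: "'w set \<Rightarrow> ('w \<Rightarrow> 'w \<Rightarrow> real) \<Rightarrow> ('w \<Rightarrow> real) \<Rightarrow> real" where
  "quad_form W G h = (\<Sum>w\<in>W. \<Sum>w'\<in>W. G w w' * h w * h w')"

definition psd_on :: "'w set \<Rightarrow> ('w \<Rightarrow> 'w \<Rightarrow> real) \<Rightarrow> bool" where
  "psd_on W G \<longleftrightarrow> (\<forall>w\<in>W. \<forall>w'\<in>W. G w w' = G w' w) \<and> (\<forall>h. 0 \<le> quad_form W G h)"

lemma psd_on_nonneg: "psd_on W G \<Longrightarrow> 0 \<le> quad_form W G h"
  unfolding psd_on_def by blast

lemma psd_on_sym: "psd_on W G \<Longrightarrow> w \<in> W \<Longrightarrow> w' \<in> W \<Longrightarrow> G w w' = G w' w"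
  unfolding psd_on_def by blast

lemma quad_form_cong: "(\<And>w. w \<in> W \<Longrightarrow> h w = h' w) \<Longrightarrow> quad_form W G h = quad_form W G h'"
  unfolding quad_form_def by (auto intro!: sum.cong)

lemma quad_form_insert:
  assumes "finite W" "w0 \<notin> W" "\<forall>w\<in>W. G w w0 = G w0 w"
  shows "quad_form (insert w0 W) G h
           = G w0 w0 * (h w0)^2 + 2 * h w0 * (\<Sum>w\<in>W. G w0 w * h w) + quad_form W G h"
proof -
  have "quad_form (insert w0 W) G h = G w0 w0 * h w0 * h w0 + (\<Sum>w\<in>W. G w0 w * h w0 * h w)
      + ((\<Sum>w\<in>W. G w w0 * h w * h w0) + quad_form W G h)"
    unfolding quad_form_def using assms(1,2) by (simp add: sum.distrib)
  also have "(\<Sum>w\<in>W. G w w0 * h w * h w0) = (\<Sum>w\<in>W. G w0 w * h w0 * h w)"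
    using assms(3) by (intro sum.cong) auto
  finally show ?thesis
    by (simp add: power2_eq_square sum_distrib_left mult_ac)
qed

context
  fixes W :: "'w set" and w0 :: 'w and G :: "'w \<Rightarrow> 'w \<Rightarrow> real"
  assumes finite: "finite W" and fresh: "w0 \<notin> W" and psd: "psd_on (insert w0 W) G"
begin

private lemma quad_form_insert':
  "quad_form (insert w0 W) G h
     = G w0 w0 * (h w0)^2 + 2 * h w0 * (\<Sum>w\<in>W. G w0 w * h w) + quad_form W G h"
  by (intro quad_form_insert finite fresh ballI psd_on_sym[OF psd]) auto

private lemma upd_fresh:
  "(\<Sum>w\<in>W. G w0 w * (h(w0 := a)) w) = (\<Sum>w\<in>W. G w0 w * h w)"
  "quad_form W G (h(w0 := a)) = quad_form W G h"
  using fresh by (auto intro!: sum.cong quad_form_cong)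

lemma psd_on_insertD: "psd_on W G" "0 \<le> G w0 w0"
proof -
  have "0 \<le> quad_form W G h" for h
    using psd_on_nonneg[OF psd, of "h(w0 := 0)"] by (simp add: quad_form_insert' upd_fresh)
  then show "psd_on W G" unfolding psd_on_def by (blast intro: psd_on_sym[OF psd])
  have "quad_form W G (\<lambda>_. 0) = 0"
    by (simp add: quad_form_def)
  then show "0 \<le> G w0 w0"
    using psd_on_nonneg[OF psd, of "(\<lambda>_. 0)(w0 := 1)"]
    unfolding quad_form_insert' upd_fresh by simp
qed

text \<open>If \<open>G w0 w0 = 0\<close>, the quadratic form is affine in \<open>h w0\<close>, so its slope must vanish.\<close>
lemma psd_on_zero_diag:
  assumes "G w0 w0 = 0" "w \<in> W"
  shows "G w0 w = 0"
proof (rule ccontr)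
  assume ne: "G w0 w \<noteq> 0"
  define e where "e = (\<lambda>u. if u = w then 1 else 0 :: real)"
  define C where "C = quad_form W G e"
  define lam where "lam = - (\<bar>C\<bar> + 1) / (2 * G w0 w)"
  have slope: "(\<Sum>u\<in>W. G w0 u * e u) = G w0 w"
    using assms(2) finite by (simp add: e_def if_distrib cong: if_cong)
  have "0 \<le> quad_form (insert w0 W) G (e(w0 := lam))"
    by (rule psd_on_nonneg[OF psd])
  also have "\<dots> = 2 * lam * G w0 w + C"
    unfolding quad_form_insert' upd_fresh slope C_def using assms(1) by simp
  also have "\<dots> = C - \<bar>C\<bar> - 1"
    using ne by (simp add: lam_def)
  finally show False by linarith
qed

definition schur :: "'w \<Rightarrow> 'w \<Rightarrow> real" where
  "schur w w' = G w w' - G w0 w * G w0 w' / G w0 w0"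

lemma quad_form_schur:
  "quad_form W schur h = quad_form W G h - (\<Sum>w\<in>W. G w0 w * h w)^2 / G w0 w0"
proof -
  have "quad_form W schur h
      = quad_form W G h - (\<Sum>w\<in>W. \<Sum>w'\<in>W. (G w0 w * h w) * (G w0 w' * h w')) / G w0 w0"
    unfolding quad_form_def schur_def
    by (simp add: sum_subtractf sum_divide_distrib left_diff_distrib algebra_simps)
  also have "(\<Sum>w\<in>W. \<Sum>w'\<in>W. (G w0 w * h w) * (G w0 w' * h w')) = (\<Sum>w\<in>W. G w0 w * h w)^2"
    by (simp add: power2_eq_square sum_product)
  finally show ?thesis .
qed

lemma psd_on_schur:
  assumes "0 < G w0 w0"
  shows "psd_on W schur"
proof -
  have "0 \<le> quad_form W schur h" for h
  proof -
    define g S where "g = G w0 w0" and "S = (\<Sum>w\<in>W. G w0 w * h w)"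
    have "0 \<le> quad_form (insert w0 W) G (h(w0 := - S / g))"
      by (rule psd_on_nonneg[OF psd])
    also have "\<dots> = quad_form W schur h"
      unfolding quad_form_insert' upd_fresh quad_form_schur g_def[symmetric] S_def[symmetric]
      using assms by (simp add: g_def power2_eq_square field_simps)
    finally show ?thesis .
  qed
  moreover have "schur w w' = schur w' w" if "w \<in> W" "w' \<in> W" for w w'
    unfolding schur_def using psd_on_sym[OF psd, of w w'] that by (simp add: mult.commute)
  ultimately show ?thesis unfolding psd_on_def by blast
qed

end

lemma sos_psd_quad_form:
  fixes z :: "'w \<Rightarrow> real^'d \<Rightarrow> real"
  assumes "finite W" "psd_on W G" "\<forall>w\<in>W. poly_deg_le n (z w)"
  shows "sos n (\<lambda>v. quad_form W G (\<lambda>w. z w v))"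
  using assms
proof (induction W arbitrary: G rule: finite_induct)
  case empty
  then show ?case by (simp add: quad_form_def sos_zero)
next
  case (insert w0 W)
  have sym: "\<forall>w\<in>W. G w w0 = G w0 w"
    using psd_on_sym[OF insert.prems(1)] by blast
  note expand = quad_form_insert[OF insert.hyps sym]
  have deg: "\<forall>w\<in>W. poly_deg_le n (z w)"
    using insert.prems(2) by simp
  consider "G w0 w0 = 0" | "0 < G w0 w0"
    using psd_on_insertD(2)[OF insert.hyps insert.prems(1)] by linarith
  then show ?case
  proof cases
    case 1
    have "sos n (\<lambda>v. quad_form W G (\<lambda>w. z w v))"
      using insert.IH psd_on_insertD(1)[OF insert.hyps insert.prems(1)] deg by blast
    then show ?thesis
      by (rule sos_cong)
        (simp add: expand 1 psd_on_zero_diag[OF insert.hyps insert.prems(1) 1])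
  next
    case 2
    define g where "g = G w0 w0"
    have "sos n (\<lambda>v. ((g * z w0 v + (\<Sum>w\<in>W. G w0 w * z w v)) / sqrt g)^2)"
      using insert.prems(2) insert.hyps(1)
      by (intro sos_square)
        (auto intro!: poly_deg_le_add poly_deg_le_cmult poly_deg_le_sum
          simp: divide_inverse mult.commute[of _ "inverse _"])
    moreover have "sos n (\<lambda>v. quad_form W (schur w0 G) (\<lambda>w. z w v))"
      using insert.IH psd_on_schur[OF insert.hyps insert.prems(1) 2] deg by blast
    ultimately have "sos n (\<lambda>v. ((g * z w0 v + (\<Sum>w\<in>W. G w0 w * z w v)) / sqrt g)^2
                                + quad_form W (schur w0 G) (\<lambda>w. z w v))"
      by (rule sos_add)
    then show ?thesis
      by (rule sos_cong)
        (use 2 in \<open>simp add: expand quad_form_schur[OF insert.hyps insert.prems(1)] g_def power_divide power2_eq_square field_simps\<close>)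
  qed
qed

lemma sos_integral_square:
  fixes Q :: "'a measure" and c :: "'w \<Rightarrow> 'a \<Rightarrow> real" and z :: "'w \<Rightarrow> real^'d \<Rightarrow> real"
  assumes "finite W" "\<forall>w\<in>W. poly_deg_le n (z w)"
    and int: "\<forall>w\<in>W. \<forall>w'\<in>W. integrable Q (\<lambda>\<omega>. c w \<omega> * c w' \<omega>)"
  shows "sos n (\<lambda>v. \<integral>\<omega>. (\<Sum>w\<in>W. c w \<omega> * z w v)^2 \<partial>Q)"
proof -
  define G where "G = (\<lambda>w w'. \<integral>\<omega>. c w \<omega> * c w' \<omega> \<partial>Q)"
  have gram: "(\<integral>\<omega>. (\<Sum>w\<in>W. c w \<omega> * h w)^2 \<partial>Q) = quad_form W G h" for h
  proof -
    have "(\<integral>\<omega>. (\<Sum>w\<in>W. c w \<omega> * h w)^2 \<partial>Q)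
        = (\<integral>\<omega>. (\<Sum>w\<in>W. \<Sum>w'\<in>W. (c w \<omega> * c w' \<omega>) * (h w * h w')) \<partial>Q)"
      by (simp add: power2_eq_square sum_product mult_ac)
    also have "\<dots> = quad_form W G h"
      using int by (simp add: integral_sum integrable_sum quad_form_def G_def mult_ac)
    finally show ?thesis .
  qed
  have "psd_on W G"
    unfolding psd_on_def using gram[symmetric] by (simp add: G_def mult.commute)
  then have "sos n (\<lambda>v. quad_form W G (\<lambda>w. z w v))"
    by (rule sos_psd_quad_form[OF assms(1) _ assms(2)])
  then show ?thesis by (rule sos_cong) (simp add: gram)
qed

section \<open>Tensor polynomials\<close>

lemma prod_lessThan_add: "(\<Prod>k<a+b. F k) = (\<Prod>k<a. F k) * (\<Prod>k<b. F (a+k))"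
  for F :: "nat \<Rightarrow> 'a::comm_monoid_mult"
  by (induction b) (auto simp: mult_ac)

lemma prod_nth_append:
  "(\<Prod>k<length xs + length ys. g ((xs @ ys) ! k)) = (\<Prod>k<length xs. g (xs ! k)) * (\<Prod>k<length ys. g (ys ! k))"
  unfolding prod_lessThan_add by (simp add: nth_append)

lemma prod_sum_eq_sum_lists:
  fixes f :: "nat \<Rightarrow> 'd::finite \<Rightarrow> 'r::comm_semiring_1"
  shows "(\<Prod>k<m. \<Sum>i\<in>UNIV. f k i) = (\<Sum>js\<in>{js. length js = m}. \<Prod>k<m. f k (js ! k))"
proof (induction m)
  case 0
  have "{js::'d list. length js = 0} = {[]}" by auto
  then show ?case by simp
next
  case (Suc m)
  have "(\<Prod>k<Suc m. \<Sum>i\<in>UNIV. f k i)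
      = (\<Sum>js\<in>{js. length js = m}. \<Prod>k<m. f k (js ! k)) * (\<Sum>i\<in>UNIV. f m i)"
    using Suc by simp
  also have "\<dots> = (\<Sum>p\<in>{js. length js = m} \<times> UNIV. (\<Prod>k<m. f k (fst p ! k)) * f m (snd p))"
    by (simp add: sum_product sum.cartesian_product case_prod_beta)
  also have "\<dots> = (\<Sum>js\<in>{js. length js = Suc m}. \<Prod>k<Suc m. f k (js ! k))"
  proof (rule sum.reindex_bij_witness[where j="\<lambda>p. fst p @ [snd p]" and i="\<lambda>js. (butlast js, last js)"])
    fix p :: "'d list \<times> 'd" assume "p \<in> {js. length js = m} \<times> UNIV"
    then show "(\<Prod>k<Suc m. f k ((fst p @ [snd p]) ! k)) = (\<Prod>k<m. f k (fst p ! k)) * f m (snd p)"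
      by (auto simp: nth_append intro!: prod.cong)
  next
    fix js :: "'d list" assume "js \<in> {js. length js = Suc m}"
    then show "fst (butlast js, last js) @ [snd (butlast js, last js)] = js"
      by (cases js rule: rev_cases) auto
  qed auto
  finally show ?case .
qed

lemma tensor_poly_eq:
  "tensor_poly m T v = (\<Sum>js\<in>{js. length js = m}. T js * (\<Prod>k<m. v $ (js ! k)))"
  unfolding tensor_poly_def by simp

lemma tensor_poly_mult:
  "tensor_poly (a + b) (\<lambda>js. T (take a js) * S (drop a js)) v = tensor_poly a T v * tensor_poly b S v"
proof -
  have "tensor_poly a T v * tensor_poly b S v =
     (\<Sum>p\<in>{js. length js = a} \<times> {js. length js = b}.
        (T (fst p) * (\<Prod>k<a. v $ (fst p ! k))) * (S (snd p) * (\<Prod>k<b. v $ (snd p ! k))))"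
    unfolding tensor_poly_eq by (simp add: sum_product sum.cartesian_product case_prod_beta)
  also have "\<dots> = tensor_poly (a + b) (\<lambda>js. T (take a js) * S (drop a js)) v"
    unfolding tensor_poly_eq
  proof (rule sum.reindex_bij_witness[where j="\<lambda>p. fst p @ snd p" and i="\<lambda>js. (take a js, drop a js)"])
    fix p :: "'a list \<times> 'a list" assume "p \<in> {js. length js = a} \<times> {js. length js = b}"
    then show "T (take a (fst p @ snd p)) * S (drop a (fst p @ snd p)) * (\<Prod>k<a + b. v $ ((fst p @ snd p) ! k))
        = T (fst p) * (\<Prod>k<a. v $ (fst p ! k)) * (S (snd p) * (\<Prod>k<b. v $ (snd p ! k)))"
      by (auto simp: prod_nth_append[where g="vec_nth v"] mult_ac)
  qed auto
  finally show ?thesis by simp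
qed

lemma tensor_poly_tensor_prod_list:
  "tensor_poly (sum_list (map fst L)) (tensor_prod_list L) v = (\<Prod>(m, T)\<leftarrow>L. tensor_poly m T v)"
proof (induction L)
  case Nil
  have "{js::'a list. length js = 0} = {[]}" by auto
  then show ?case by (simp add: tensor_poly_eq)
next
  case (Cons x L)
  then show ?case by (cases x) (simp add: tensor_poly_mult)
qed

lemma prod_list_map_eq_prod_nth: "prod_list (map f xs) = (\<Prod>s<length xs. f (xs ! s))"
  by (simp add: prod.list_conv_set_nth atLeast0LessThan)

definition coord_prod :: "real^'d \<Rightarrow> 'd list \<Rightarrow> real" where
  "coord_prod v js = (\<Prod>k<length js. v $ (js ! k))"

lemma poly_deg_le_coord_prod: "poly_deg_le (length js) (\<lambda>v. coord_prod v js)"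
proof -
  have "poly_deg_le (\<Sum>k<length js. 1) (\<lambda>v. \<Prod>k<length js. v $ (js ! k))"
    by (rule poly_deg_le_prod) (simp, intro ballI poly_deg_le_component)
  then show ?thesis by (simp add: coord_prod_def)
qed

text \<open>Multi-indices of the monomials in the expansion of \<open>\<Prod>_(s<N) \<langle>x_s, v\<rangle>^(e s)\<close>.\<close>
definition index_lists :: "nat \<Rightarrow> (nat \<Rightarrow> nat) \<Rightarrow> (nat \<Rightarrow> 'i::finite list) set" where
  "index_lists N e = PiE {..<N} (\<lambda>s. {js. length js = e s})"

lemma finite_index_lists: "finite (index_lists N e)"
  unfolding index_lists_def by (auto intro!: finite_PiE simp: finite_list_length)

lemma index_lists_length: "\<phi> \<in> index_lists N e \<Longrightarrow> s < N \<Longrightarrow> length (\<phi> s) = e s"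
  unfolding index_lists_def by auto

lemma sum_length_index_lists: "\<phi> \<in> index_lists N e \<Longrightarrow> (\<Sum>s<N. length (\<phi> s)) = (\<Sum>s<N. e s)"
  by (intro sum.cong) (auto simp: index_lists_length)

section \<open>Exponent vectors\<close>

lemma sum_remove_two:
  fixes f :: "'a \<Rightarrow> 'b::comm_monoid_add"
  assumes "finite A" "x \<in> A" "y \<in> A" "x \<noteq> y"
  shows "sum f A = f x + f y + sum f (A - {x, y})"
proof -
  have "A = insert x (insert y (A - {x, y}))" using assms by auto
  then have "sum f A = sum f (insert x (insert y (A - {x, y})))" by simp
  then show ?thesis using assms by (simp add: add.assoc)
qed

lemma prod_remove_two:
  fixes f :: "'a \<Rightarrow> 'b::comm_monoid_mult"
  assumes "finite A" "x \<in> A" "y \<in> A" "x \<noteq> y"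
  shows "prod f A = f x * f y * prod f (A - {x, y})"
proof -
  have "A = insert x (insert y (A - {x, y}))" using assms by auto
  then have "prod f A = prod f (insert x (insert y (A - {x, y})))" by simp
  then show ?thesis using assms by (simp add: mult.assoc)
qed

lemma sum_transfer_unit:
  fixes k :: "'a \<Rightarrow> nat"
  assumes "finite A" "x \<in> A" "y \<in> A" "x \<noteq> y" "1 \<le> k y"
  shows "sum (k(y := k y - 1, x := k x + 1)) A = sum k A"
proof -
  have "sum (k(y := k y - 1, x := k x + 1)) (A - {x, y}) = sum k (A - {x, y})"
    by (intro sum.cong) auto
  then show ?thesis
    using assms sum_remove_two[OF assms(1-4), of k]
      sum_remove_two[OF assms(1-4), of "k(y := k y - 1, x := k x + 1)"] by simp
qed

lemma obtain_other_pos: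
  fixes k :: "nat \<Rightarrow> nat"
  assumes "s0 < N" "k s0 < (\<Sum>s<N. k s)"
  obtains s1 where "s1 < N" "s1 \<noteq> s0" "1 \<le> k s1"
proof -
  have "(\<Sum>s<N. k s) = k s0 + (\<Sum>s\<in>{..<N} - {s0}. k s)"
    using assms(1) by (simp add: sum.remove)
  then have "(\<Sum>s\<in>{..<N} - {s0}. k s) \<noteq> 0"
    using assms(2) by linarith
  then obtain s1 where "s1 \<in> {..<N} - {s0}" "k s1 \<noteq> 0"
    by (meson sum.neutral)
  then show ?thesis using that by auto
qed

lemma balanced_split:
  fixes i :: "nat \<Rightarrow> nat"
  assumes sum_i: "(\<Sum>s<N. i s) = 2 * t" and le_i: "\<forall>s<N. i s \<le> 2 * c"
  obtains a b where "\<forall>s. a s + b s = i s" "(\<Sum>s<N. a s) = t" "(\<Sum>s<N. b s) = t"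
    "\<forall>s<N. a s \<le> c \<and> b s \<le> c"
proof -
  define Odd where "Odd = {..<N} \<inter> {s. odd (i s)}"
  have "(\<Sum>s<N. i s) = (\<Sum>s<N. 2 * (i s div 2) + of_bool (odd (i s)))"
    by (intro sum.cong) auto
  then have card_Odd: "2 * (\<Sum>s<N. i s div 2) + card Odd = 2 * t"
    using sum_i by (simp add: Odd_def sum.distrib sum_distrib_left)
  txt \<open>Odd parts are split unevenly; half of them get the larger half in \<open>a\<close>, the other half in \<open>b\<close>.\<close>
  obtain T where T: "T \<subseteq> Odd" "card T = card Odd div 2"
    by (rule obtain_subset_with_card_n[of "card Odd div 2" Odd]) simp_all
  define a where "a s = i s div 2 + of_bool (s \<in> T)" for s
  define b where "b s = i s - a s" for s
  have T_odd: "odd (i s) \<and> s < N" if "s \<in> T" for s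
    using that T(1) by (auto simp: Odd_def)
  have a_le: "a s \<le> i s" for s
    using T_odd[of s] by (cases "s \<in> T") (auto simp: a_def elim!: oddE)
  show ?thesis
  proof (rule that)
    show "\<forall>s. a s + b s = i s"
      using a_le by (simp add: b_def)
    have "{..<N} \<inter> {s. s \<in> T} = T"
      using T_odd by auto
    then have "(\<Sum>s<N. a s) = (\<Sum>s<N. i s div 2) + card T"
      by (simp add: a_def sum.distrib)
    moreover have "2 * card T = card Odd"
      using card_Odd T(2) by (metis dvd_add_right_iff dvd_triv_left dvd_mult_div_cancel)
    ultimately show sum_a: "(\<Sum>s<N. a s) = t"
      using card_Odd by linarith
    show "(\<Sum>s<N. b s) = t"
      using sum_i sum_a a_le by (simp add: b_def sum_subtractf_nat)
    show "\<forall>s<N. a s \<le> c \<and> b s \<le> c"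
    proof (intro allI impI)
      fix s assume "s < N"
      then have "i s \<le> 2 * c" using le_i by auto
      then show "a s \<le> c \<and> b s \<le> c"
        using T_odd[of s] by (cases "s \<in> T") (auto simp: a_def b_def elim!: oddE evenE)
    qed
  qed
qed

section \<open>Moment polynomials\<close>

lemma power_add_le: "0 \<le> a \<Longrightarrow> 0 \<le> b \<Longrightarrow> (a + b)^n \<le> 2^n * (a^n + b^n)" for a b :: real
proof -
  assume ab: "0 \<le> a" "0 \<le> b"
  have "(a + b)^n \<le> (2 * max a b)^n" using ab by (intro power_mono) auto
  also have "\<dots> = 2^n * (max a b)^n" by (simp add: power_mult_distrib)
  also have "(max a b)^n \<le> a^n + b^n" using ab by (cases "a \<le> b") (auto simp: max_def)
  then have "2^n * (max a b)^n \<le> 2^n * (a^n + b^n)" by simp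
  finally show ?thesis .
qed

locale central_moments =
  fixes p :: "(real^'d) measure" and t :: nat
  assumes t_ge_2: "t \<ge> 2" and prob_p: "prob_space p" and sets_p: "sets p = sets borel"
    and integrable_norm_pow: "integrable p (\<lambda>x. norm x ^ (2*t))"
begin

definition centred_prod :: "real^'d \<Rightarrow> 'd list \<Rightarrow> real" where
  "centred_prod x js = (\<Prod>k<length js. (x - mean_vec p) $ (js ! k))"

definition centred_inner :: "real^'d \<Rightarrow> real^'d \<Rightarrow> real" where
  "centred_inner x v = (x - mean_vec p) \<bullet> v"

definition moment_poly :: "nat \<Rightarrow> real^'d \<Rightarrow> real" where
  "moment_poly j v = tensor_poly j (moment_tensor p j) v"

lemma centred_prod_append: "centred_prod x (xs @ ys) = centred_prod x xs * centred_prod x ys"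
  unfolding centred_prod_def using prod_nth_append[where xs=xs and ys=ys] by simp

lemma centred_prod_integrable:
  assumes "length js \<le> 2*t"
  shows "integrable p (\<lambda>x. centred_prod x js)"
proof (rule Bochner_Integration.integrable_bound)
  let ?m = "mean_vec p"
  show "integrable p (\<lambda>x. 1 + 2^(2*t) * (norm x ^ (2*t) + norm ?m ^ (2*t)))"
    using integrable_norm_pow prob_space.finite_measure[OF prob_p]
    by (intro Bochner_Integration.integrable_add integrable_mult_right finite_measure.integrable_const) auto
  have "(\<lambda>x. centred_prod x js) \<in> borel_measurable borel"
    unfolding centred_prod_def
    by (intro borel_measurable_prod borel_measurable_continuous_onI continuous_intros)
  then show "(\<lambda>x. centred_prod x js) \<in> borel_measurable p"
    using measurable_cong_sets[OF sets_p refl] by blast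
  show "AE x in p. norm (centred_prod x js) \<le> norm (1 + 2^(2*t) * (norm x ^ (2*t) + norm ?m ^ (2*t)))"
  proof (rule AE_I2)
    fix x
    have "norm (centred_prod x js) = (\<Prod>k<length js. \<bar>(x - ?m) $ (js ! k)\<bar>)"
      unfolding centred_prod_def by (simp add: abs_prod)
    also have "\<dots> \<le> norm (x - ?m) ^ length js"
      using prod_mono[of "{..<length js}" "\<lambda>k. \<bar>(x - ?m) $ (js ! k)\<bar>" "\<lambda>_. norm (x - ?m)"]
      by (simp del: vector_minus_component add: component_le_norm_cart)
    also have "\<dots> \<le> 1 + norm (x - ?m) ^ (2*t)"
    proof (cases "norm (x - ?m) \<le> 1")
      case True
      then show ?thesis by (smt (verit) power_le_one zero_le_power norm_ge_zero)
    next
      case False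
      then show ?thesis using assms by (smt (verit) power_increasing)
    qed
    also have "norm (x - ?m) ^ (2*t) \<le> (norm x + norm ?m) ^ (2*t)"
      by (intro power_mono norm_triangle_ineq4) auto
    also have "\<dots> \<le> 2^(2*t) * (norm x ^ (2*t) + norm ?m ^ (2*t))"
      by (intro power_add_le) auto
    finally show "norm (centred_prod x js) \<le> norm (1 + 2^(2*t) * (norm x ^ (2*t) + norm ?m ^ (2*t)))"
      by simp
  qed
qed

lemma centred_inner_power:
  "centred_inner x v ^ j = (\<Sum>js\<in>{js. length js = j}. centred_prod x js * coord_prod v js)"
proof -
  have "centred_inner x v ^ j = (\<Prod>k<j. \<Sum>i\<in>UNIV. (x - mean_vec p) $ i * v $ i)"
    unfolding centred_inner_def inner_vec_def by simp
  also have "\<dots> = (\<Sum>js\<in>{js. length js = j}. \<Prod>k<j. (x - mean_vec p) $ (js ! k) * v $ (js ! k))"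
    by (rule prod_sum_eq_sum_lists)
  finally show ?thesis
    unfolding centred_prod_def coord_prod_def by (simp add: prod.distrib)
qed

lemma moment_poly_expectation:
  assumes "j \<le> 2*t"
  shows "integrable p (\<lambda>x. centred_inner x v ^ j)" "moment_poly j v = (\<integral>x. centred_inner x v ^ j \<partial>p)"
proof -
  have int: "integrable p (\<lambda>x. centred_prod x js * coord_prod v js)" if "length js = j" for js
    using that assms by (intro integrable_mult_left centred_prod_integrable) auto
  then show "integrable p (\<lambda>x. centred_inner x v ^ j)"
    unfolding centred_inner_power by (intro Bochner_Integration.integrable_sum) auto
  have "(\<integral>x. centred_inner x v ^ j \<partial>p)
      = (\<Sum>js\<in>{js. length js = j}. (\<integral>x. centred_prod x js \<partial>p) * coord_prod v js)"
    unfolding centred_inner_power using int by (subst Bochner_Integration.integral_sum) auto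
  also have "\<dots> = moment_poly j v"
    unfolding moment_poly_def tensor_poly_eq moment_tensor_def centred_prod_def coord_prod_def
    by (intro sum.cong) auto
  finally show "moment_poly j v = (\<integral>x. centred_inner x v ^ j \<partial>p)" by simp
qed

lemma moment_poly_0: "moment_poly 0 v = 1"
  using moment_poly_expectation(2)[of 0 v] prob_p by (simp add: prob_space.prob_space)

lemma tensor_poly_moment_prod_list:
  assumes "sum_list ks = m"
  shows "tensor_poly m (tensor_prod_list (map (\<lambda>i. (i, moment_tensor p i)) ks)) v = (\<Prod>k\<leftarrow>ks. moment_poly k v)"
  using tensor_poly_tensor_prod_list[of "map (\<lambda>i. (i, moment_tensor p i)) ks" v] assms
  by (simp add: comp_def moment_poly_def)

lemma prod_centred_inner_power:
  fixes N :: nat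
  shows "(\<Prod>s<N. centred_inner (\<omega> s) v ^ e s)
     = (\<Sum>\<phi>\<in>index_lists N e. (\<Prod>s<N. centred_prod (\<omega> s) (\<phi> s)) * (\<Prod>s<N. coord_prod v (\<phi> s)))"
proof -
  have "(\<Prod>s<N. centred_inner (\<omega> s) v ^ e s)
      = (\<Prod>s<N. \<Sum>js\<in>{js. length js = e s}. centred_prod (\<omega> s) js * coord_prod v js)"
    unfolding centred_inner_power ..
  also have "\<dots> = (\<Sum>\<phi>\<in>index_lists N e. \<Prod>s<N. centred_prod (\<omega> s) (\<phi> s) * coord_prod v (\<phi> s))"
    unfolding index_lists_def by (rule prod_sum_PiE) (auto simp: finite_list_length)
  finally show ?thesis by (simp add: prod.distrib)
qed

lemma product_sigma_finite_copies: "product_sigma_finite (\<lambda>_::nat. p)"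
  unfolding product_sigma_finite_def using prob_space_imp_sigma_finite[OF prob_p] by simp

lemma expectation_prod_centred_inner_power:
  fixes N :: nat
  assumes "\<forall>s<N. e s \<le> 2*t"
  shows "integrable (PiM {..<N} (\<lambda>_. p)) (\<lambda>\<omega>. \<Prod>s<N. centred_inner (\<omega> s) v ^ e s)"
    "(\<integral>\<omega>. (\<Prod>s<N. centred_inner (\<omega> s) v ^ e s) \<partial>PiM {..<N} (\<lambda>_. p)) = (\<Prod>s<N. moment_poly (e s) v)"
  using product_sigma_finite.product_integrable_prod[OF product_sigma_finite_copies,
      where I="{..<N}" and f="\<lambda>s x. centred_inner x v ^ e s"]
    product_sigma_finite.product_integral_prod[OF product_sigma_finite_copies,
      where I="{..<N}" and f="\<lambda>s x. centred_inner x v ^ e s"]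
    moment_poly_expectation assms
  by auto

lemma integrable_prod_centred_prod_mult:
  fixes N :: nat
  assumes "\<forall>s<N. length (\<phi> s) \<le> t \<and> length (\<psi> s) \<le> t"
  shows "integrable (PiM {..<N} (\<lambda>_. p))
           (\<lambda>\<omega>. (\<Prod>s<N. centred_prod (\<omega> s) (\<phi> s)) * (\<Prod>s<N. centred_prod (\<omega> s) (\<psi> s)))"
proof -
  have "integrable (PiM {..<N} (\<lambda>_. p)) (\<lambda>\<omega>. \<Prod>s<N. centred_prod (\<omega> s) (\<phi> s @ \<psi> s))"
    using assms centred_prod_integrable
      product_sigma_finite.product_integrable_prod[OF product_sigma_finite_copies,
        where I="{..<N}" and f="\<lambda>s x. centred_prod x (\<phi> s @ \<psi> s)"]
    by force
  then show ?thesis by (simp add: centred_prod_append prod.distrib)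
qed

lemma sos_expectation_square:
  fixes N n :: nat and a b :: "nat \<Rightarrow> nat" and \<theta> :: real
  assumes sum_a: "(\<Sum>s<N. a s) = n" and sum_b: "(\<Sum>s<N. b s) = n" and le_t: "\<forall>s<N. a s \<le> t \<and> b s \<le> t"
  shows "sos n (\<lambda>v. \<integral>\<omega>. ((\<Prod>s<N. centred_inner (\<omega> s) v ^ a s) - \<theta> * (\<Prod>s<N. centred_inner (\<omega> s) v ^ b s))^2
                       \<partial>PiM {..<N} (\<lambda>_. p))"
proof -
  define W :: "((nat \<Rightarrow> 'd list) + (nat \<Rightarrow> 'd list)) set"
    where "W = index_lists N a <+> index_lists N b"
  define idx :: "(nat \<Rightarrow> 'd list) + (nat \<Rightarrow> 'd list) \<Rightarrow> nat \<Rightarrow> 'd list"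
    where "idx = case_sum id id"
  define c where "c = (\<lambda>w \<omega>. case_sum (\<lambda>_. 1) (\<lambda>_. -\<theta>) w * (\<Prod>s<N. centred_prod (\<omega> s) (idx w s)))"
  define z where "z = (\<lambda>w v. \<Prod>s<N. coord_prod v (idx w s))"
  have finite: "finite W"
    unfolding W_def by (simp add: finite_index_lists)
  have idx_len: "(\<forall>s<N. length (idx w s) \<le> t) \<and> (\<Sum>s<N. length (idx w s)) = n" if "w \<in> W" for w
    using that le_t sum_a sum_b
    by (auto simp: W_def idx_def index_lists_length sum_length_index_lists)
  have deg: "\<forall>w\<in>W. poly_deg_le n (z w)"
  proof
    fix w assume "w \<in> W"
    have "poly_deg_le (\<Sum>s<N. length (idx w s)) (z w)"
      unfolding z_def by (rule poly_deg_le_prod) (simp, intro ballI poly_deg_le_coord_prod)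
    then show "poly_deg_le n (z w)" using idx_len[OF \<open>w \<in> W\<close>] by simp
  qed
  have int: "\<forall>w\<in>W. \<forall>w'\<in>W. integrable (PiM {..<N} (\<lambda>_. p)) (\<lambda>\<omega>. c w \<omega> * c w' \<omega>)"
  proof (intro ballI)
    fix w w' assume "w \<in> W" "w' \<in> W"
    then have "integrable (PiM {..<N} (\<lambda>_. p)) (\<lambda>\<omega>. (case_sum (\<lambda>_. 1) (\<lambda>_. -\<theta>) w * case_sum (\<lambda>_. 1) (\<lambda>_. -\<theta>) w')
         * ((\<Prod>s<N. centred_prod (\<omega> s) (idx w s)) * (\<Prod>s<N. centred_prod (\<omega> s) (idx w' s))))"
      using idx_len by (intro integrable_mult_right integrable_prod_centred_prod_mult) auto
    then show "integrable (PiM {..<N} (\<lambda>_. p)) (\<lambda>\<omega>. c w \<omega> * c w' \<omega>)"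
      by (simp add: c_def mult_ac)
  qed
  have expand: "(\<Sum>w\<in>W. c w \<omega> * z w v)
      = (\<Prod>s<N. centred_inner (\<omega> s) v ^ a s) - \<theta> * (\<Prod>s<N. centred_inner (\<omega> s) v ^ b s)" for \<omega> v
    unfolding W_def sum.Plus[OF finite_index_lists finite_index_lists] prod_centred_inner_power
    by (simp add: c_def z_def idx_def sum_distrib_left sum_negf mult.assoc)
  show ?thesis
    using sos_integral_square[OF finite deg int] by (simp add: expand)
qed

lemma sos_moment_prod_square:
  fixes N n :: nat and a b :: "nat \<Rightarrow> nat" and \<theta> :: real
  assumes "(\<Sum>s<N. a s) = n" "(\<Sum>s<N. b s) = n" "\<forall>s<N. a s \<le> t \<and> b s \<le> t"
  shows "sos n (\<lambda>v. (\<Prod>s<N. moment_poly (2 * a s) v) + \<theta>^2 * (\<Prod>s<N. moment_poly (2 * b s) v)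
                    - 2 * \<theta> * (\<Prod>s<N. moment_poly (a s + b s) v))"
proof (rule sos_cong[OF sos_expectation_square[OF assms, of \<theta>]])
  fix v
  define P where "P = (\<lambda>e \<omega>. \<Prod>s<N. centred_inner (\<omega> s) v ^ e s)"
  have P_double: "P (\<lambda>s. 2 * e s) \<omega> = (P e \<omega>)^2" for e \<omega>
    by (simp add: P_def mult_2 power_add prod.distrib power2_eq_square)
  have P_add: "P (\<lambda>s. a s + b s) \<omega> = P a \<omega> * P b \<omega>" for \<omega>
    by (simp add: P_def power_add prod.distrib)
  have square: "(P a \<omega> - \<theta> * P b \<omega>)^2
      = P (\<lambda>s. 2 * a s) \<omega> + \<theta>^2 * P (\<lambda>s. 2 * b s) \<omega> - 2 * \<theta> * P (\<lambda>s. a s + b s) \<omega>" for \<omega>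
    unfolding P_double P_add by (simp add: power2_eq_square algebra_simps)
  have "\<forall>s<N. 2 * a s \<le> 2*t" "\<forall>s<N. 2 * b s \<le> 2*t" "\<forall>s<N. a s + b s \<le> 2*t"
    using assms(3) by auto
  note moments = this[THEN expectation_prod_centred_inner_power(1)]
    this[THEN expectation_prod_centred_inner_power(2)]
  show "(\<integral>\<omega>. (P a \<omega> - \<theta> * P b \<omega>)^2 \<partial>PiM {..<N} (\<lambda>_. p))
      = (\<Prod>s<N. moment_poly (2 * a s) v) + \<theta>^2 * (\<Prod>s<N. moment_poly (2 * b s) v)
        - 2 * \<theta> * (\<Prod>s<N. moment_poly (a s + b s) v)"
    unfolding square using moments
    by (simp add: P_def Bochner_Integration.integral_diff Bochner_Integration.integral_add)
qed

lemma sos_even_moment: "k \<le> t \<Longrightarrow> sos k (moment_poly (2 * k))"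
  using sos_moment_prod_square[where N=1 and n=k and a="\<lambda>_. k" and b="\<lambda>_. k" and \<theta>=0] by simp

lemma sos_moment_pair_square:
  assumes "a0 + a1 = n" "b0 + b1 = n" "a0 \<le> t" "a1 \<le> t" "b0 \<le> t" "b1 \<le> t"
  shows "sos n (\<lambda>v. moment_poly (2 * a0) v * moment_poly (2 * a1) v + moment_poly (2 * b0) v * moment_poly (2 * b1) v
                    - 2 * (moment_poly (a0 + b0) v * moment_poly (a1 + b1) v))"
proof -
  define a b where "a = (\<lambda>s::nat. if s = 0 then a0 else a1)" and "b = (\<lambda>s::nat. if s = 0 then b0 else b1)"
  have "sos n (\<lambda>v. (\<Prod>s<2. moment_poly (2 * a s) v) + 1^2 * (\<Prod>s<2. moment_poly (2 * b s) v)
                    - 2 * 1 * (\<Prod>s<2. moment_poly (a s + b s) v))"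
    by (rule sos_moment_prod_square) (use assms in \<open>auto simp: a_def b_def numeral_2_eq_2 lessThan_Suc\<close>)
  then show ?thesis
    by (rule sos_cong) (simp add: a_def b_def numeral_2_eq_2 lessThan_Suc mult.commute)
qed

lemma sos_moment_pair_spread:
  assumes "1 \<le> a" "a \<le> b" "b + 1 \<le> t"
  shows "sos (a + b) (\<lambda>v. moment_poly (2 * (a - 1)) v * moment_poly (2 * (b + 1)) v
                          - moment_poly (2 * a) v * moment_poly (2 * b) v)"
proof -
  define F where "F = (\<lambda>j v. moment_poly (2 * j) v * moment_poly (2 * (a + b - j)) v)"
  define G where "G = (\<lambda>j v. F j v - F (j - 1) v)"
  txt \<open>The second differences of \<open>F\<close> are sums of squares; they telescope to \<open>2 (F (a - 1) - F a)\<close>,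
    because \<open>F j = F (a + b - j)\<close>.\<close>
  have convex: "sos (a + b) (\<lambda>v. G (Suc j) v - G j v)" if "j \<in> {a..b}" for j
  proof -
    have indices: "j + 1 + (j - 1) = 2 * j" "a + b - (j + 1) + (a + b - (j - 1)) = 2 * (a + b - j)"
      using that assms by auto
    have "sos (a + b) (\<lambda>v. F (j + 1) v + F (j - 1) v - 2 * F j v)"
      using sos_moment_pair_square[of "j + 1" "a + b - (j + 1)" "a + b" "j - 1" "a + b - (j - 1)"]
        that assms
      unfolding F_def indices by auto
    then show ?thesis
      by (rule sos_cong) (simp add: G_def)
  qed
  have "sos (a + b) (\<lambda>v. (1/2) * (\<Sum>j = a..b. G (Suc j) v - G j v))"
    using convex by (intro sos_cmult sos_sum) auto
  then show ?thesis
  proof (rule sos_cong)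
    fix v
    have "F (Suc b) v = F (a - 1) v" "F b v = F a v"
      using assms by (simp_all add: F_def mult.commute)
    moreover have "F (a - 1) v = moment_poly (2 * (a - 1)) v * moment_poly (2 * (b + 1)) v"
      "F a v = moment_poly (2 * a) v * moment_poly (2 * b) v"
      using assms by (simp_all add: F_def)
    moreover have "(\<Sum>j = a..b. G (Suc j) v - G j v) = G (Suc b) v - G a v"
      using assms by (intro sum_Suc_diff) auto
    ultimately show "1/2 * (\<Sum>j = a..b. G (Suc j) v - G j v)
        = moment_poly (2 * (a - 1)) v * moment_poly (2 * (b + 1)) v - moment_poly (2 * a) v * moment_poly (2 * b) v"
      by (simp add: G_def)
  qed
qed

lemma sos_moment_prod_transfer:
  fixes N :: nat and k :: "nat \<Rightarrow> nat"
  assumes s: "s0 < N" "s1 < N" "s0 \<noteq> s1"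
    and k: "1 \<le> k s1" "k s1 \<le> k s0" "k s0 + 1 \<le> t" and sum_k: "(\<Sum>s<N. k s) = t"
  shows "sos t (\<lambda>v. (\<Prod>s<N. moment_poly (2 * (k(s1 := k s1 - 1, s0 := k s0 + 1)) s) v)
                    - (\<Prod>s<N. moment_poly (2 * k s) v))"
proof -
  define k' where "k' = k(s1 := k s1 - 1, s0 := k s0 + 1)"
  define R where "R = {..<N} - {s0, s1}"
  define MR where "MR v = (\<Prod>s\<in>R. moment_poly (2 * k s) v)" for v
  have R: "finite R" "s0 \<notin> R" "s1 \<notin> R"
    by (auto simp: R_def)
  have sum_R: "k s0 + k s1 + (\<Sum>s\<in>R. k s) = t"
    using sum_k sum_remove_two[of "{..<N}" s0 s1 k] s by (simp add: R_def)
  have prod_k: "(\<Prod>s<N. moment_poly (2 * k s) v) = moment_poly (2 * k s0) v * moment_poly (2 * k s1) v * MR v"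
    for v using prod_remove_two[of "{..<N}" s0 s1] s by (simp add: MR_def R_def)
  have "(\<Prod>s\<in>R. moment_poly (2 * k' s) v) = MR v" for v
    unfolding MR_def using R by (intro prod.cong) (auto simp: k'_def)
  moreover have "k' s0 = k s0 + 1" "k' s1 = k s1 - 1"
    using s by (simp_all add: k'_def)
  ultimately have prod_k': "(\<Prod>s<N. moment_poly (2 * k' s) v)
      = moment_poly (2 * (k s0 + 1)) v * moment_poly (2 * (k s1 - 1)) v * MR v" for v
    using prod_remove_two[of "{..<N}" s0 s1 "\<lambda>s. moment_poly (2 * k' s) v"] s by (simp add: R_def)
  have "\<forall>s\<in>R. k s \<le> t"
    using sum_R R(1) by (auto dest: member_le_sum[of _ R k])
  then have "sos (\<Sum>s\<in>R. k s) MR"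
    unfolding MR_def using R(1) by (intro sos_prod) (auto intro: sos_even_moment)
  moreover have "sos (k s1 + k s0) (\<lambda>v. moment_poly (2 * (k s1 - 1)) v * moment_poly (2 * (k s0 + 1)) v
                                        - moment_poly (2 * k s1) v * moment_poly (2 * k s0) v)"
    using k by (intro sos_moment_pair_spread) auto
  ultimately have "sos ((\<Sum>s\<in>R. k s) + (k s1 + k s0)) (\<lambda>v. MR v *
      (moment_poly (2 * (k s1 - 1)) v * moment_poly (2 * (k s0 + 1)) v - moment_poly (2 * k s1) v * moment_poly (2 * k s0) v))"
    by (rule sos_mult)
  moreover have "(\<Sum>s\<in>R. k s) + (k s1 + k s0) = t"
    using sum_R by simp
  ultimately have "sos t (\<lambda>v. MR v *
      (moment_poly (2 * (k s1 - 1)) v * moment_poly (2 * (k s0 + 1)) v - moment_poly (2 * k s1) v * moment_poly (2 * k s0) v))"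
    by simp
  then show ?thesis
    unfolding k'_def[symmetric] by (rule sos_cong) (unfold prod_k prod_k', simp add: algebra_simps)
qed

lemma sos_even_moment_prod_le_argmax:
  fixes N :: nat and k :: "nat \<Rightarrow> nat"
  assumes "s0 < N"
  shows "\<forall>s<N. k s \<le> k s0 \<Longrightarrow> k s0 \<le> t - 1 \<Longrightarrow> (\<Sum>s<N. k s) = t \<Longrightarrow>
    sos t (\<lambda>v. moment_poly 2 v * moment_poly (2 * t - 2) v - (\<Prod>s<N. moment_poly (2 * k s) v))"
proof (induction "t - 1 - k s0" arbitrary: k)
  case 0
  then have top: "k s0 = t - 1" by simp
  have "k s0 < (\<Sum>s<N. k s)"
    using 0 t_ge_2 by simp
  then obtain s1 where s1: "s1 < N" "s1 \<noteq> s0" "1 \<le> k s1"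
    by (rule obtain_other_pos[OF assms])
  define R where "R = {..<N} - {s0, s1}"
  have "k s0 + k s1 + (\<Sum>s\<in>R. k s) = t"
    using 0 sum_remove_two[of "{..<N}" s0 s1 k] assms s1 by (simp add: R_def)
  then have "k s1 = 1" "(\<Sum>s\<in>R. k s) = 0"
    using top s1 t_ge_2 by linarith+
  then have "k s1 = 1" "\<forall>s\<in>R. k s = 0"
    by (simp_all add: R_def)
  then have "(\<Prod>s\<in>R. moment_poly (2 * k s) v) = 1" "2 * k s1 = 2" for v
    by (simp_all add: moment_poly_0)
  moreover have "2 * k s0 = 2 * t - 2"
    using top by simp
  ultimately have "(\<Prod>s<N. moment_poly (2 * k s) v) = moment_poly 2 v * moment_poly (2 * t - 2) v" for v
    using prod_remove_two[of "{..<N}" s0 s1 "\<lambda>s. moment_poly (2 * k s) v"] assms s1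
    by (simp add: R_def)
  then show ?case
    by (intro sos_cong[OF sos_zero]) simp
next
  case (Suc d)
  have "k s0 < (\<Sum>s<N. k s)"
    using Suc by simp
  then obtain s1 where s1: "s1 < N" "s1 \<noteq> s0" "1 \<le> k s1"
    by (rule obtain_other_pos[OF assms])
  define k' where "k' = k(s1 := k s1 - 1, s0 := k s0 + 1)"
  have "(\<Sum>s<N. k' s) = t"
    using sum_transfer_unit[of "{..<N}" s0 s1 k] assms s1 Suc.prems by (simp add: k'_def)
  moreover have "\<forall>s<N. k' s \<le> k' s0" "k' s0 \<le> t - 1" "d = t - 1 - k' s0"
    using Suc s1 by (auto simp: k'_def)
  ultimately have "sos t (\<lambda>v. moment_poly 2 v * moment_poly (2 * t - 2) v - (\<Prod>s<N. moment_poly (2 * k' s) v))"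
    using Suc.hyps(1) by blast
  moreover have "sos t (\<lambda>v. (\<Prod>s<N. moment_poly (2 * k' s) v) - (\<Prod>s<N. moment_poly (2 * k s) v))"
    unfolding k'_def using Suc s1 assms by (intro sos_moment_prod_transfer) auto
  ultimately have "sos t (\<lambda>v. (moment_poly 2 v * moment_poly (2 * t - 2) v - (\<Prod>s<N. moment_poly (2 * k' s) v))
      + ((\<Prod>s<N. moment_poly (2 * k' s) v) - (\<Prod>s<N. moment_poly (2 * k s) v)))"
    by (rule sos_add)
  then show ?case
    by (rule sos_cong) simp
qed

lemma sos_even_moment_prod_le:
  fixes N :: nat and k :: "nat \<Rightarrow> nat"
  assumes "(\<Sum>s<N. k s) = t" "\<forall>s<N. k s \<le> t - 1"
  shows "sos t (\<lambda>v. moment_poly 2 v * moment_poly (2 * t - 2) v - (\<Prod>s<N. moment_poly (2 * k s) v))"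
proof -
  have "{..<N} \<noteq> {}"
    using assms(1) t_ge_2 by auto
  then have "Max (k ` {..<N}) \<in> k ` {..<N}"
    by (intro Max_in) auto
  then obtain s0 where "s0 < N" "k s0 = Max (k ` {..<N})"
    by auto
  moreover have "\<forall>s<N. k s \<le> Max (k ` {..<N})"
    by simp
  ultimately show ?thesis
    using assms by (intro sos_even_moment_prod_le_argmax) auto
qed

lemma sos_moment_prod_le:
  fixes N :: nat and i :: "nat \<Rightarrow> nat"
  assumes "(\<Sum>s<N. i s) = 2 * t" "\<forall>s<N. i s \<le> 2 * t - 2"
  shows "sos t (\<lambda>v. moment_poly 2 v * moment_poly (2 * t - 2) v - (\<Prod>s<N. moment_poly (i s) v))"
proof -
  obtain a b where split: "\<forall>s. a s + b s = i s" "(\<Sum>s<N. a s) = t" "(\<Sum>s<N. b s) = t"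
    "\<forall>s<N. a s \<le> t - 1 \<and> b s \<le> t - 1"
    using balanced_split[where N=N and i=i and t=t and c="t - 1"] assms by (auto simp: right_diff_distrib')
  let ?top = "\<lambda>v. moment_poly 2 v * moment_poly (2 * t - 2) v"
  have "sos t (\<lambda>v. (1/2) * (?top v - (\<Prod>s<N. moment_poly (2 * a s) v))
           + (1/2) * (?top v - (\<Prod>s<N. moment_poly (2 * b s) v))
           + (1/2) * ((\<Prod>s<N. moment_poly (2 * a s) v) + 1^2 * (\<Prod>s<N. moment_poly (2 * b s) v)
                      - 2 * 1 * (\<Prod>s<N. moment_poly (a s + b s) v)))"
    using split by (intro sos_add sos_cmult sos_even_moment_prod_le sos_moment_prod_square) auto
  then show ?thesis
    by (rule sos_cong) (simp add: split(1) algebra_simps)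
qed

end

theorem lemma4p6:
  fixes p :: "(real^'d) measure" and t :: nat and ids :: "nat list"
  assumes "t \<ge> 2"
    and "prob_space p" and "sets p = sets borel"
    and "integrable p (\<lambda>x. (norm x) ^ (2*t))"
    and "sum_list ids = 2*t"
    and "\<forall>i\<in>set ids. i \<le> 2*t - 2"
  shows "sos_le_2t t
           (tensor_poly (2*t) (tensor_prod_list (map (\<lambda>i. (i, moment_tensor p i)) ids)))
           (tensor_poly (2*t) (tensor_prod_list [(2, moment_tensor p 2), (2*t - 2, moment_tensor p (2*t - 2))]))"
proof -
  interpret central_moments p t
    using assms(1-4) unfolding central_moments_def by blast
  have top: "tensor_poly (2*t) (tensor_prod_list [(2, moment_tensor p 2), (2*t - 2, moment_tensor p (2*t - 2))]) v
      = moment_poly 2 v * moment_poly (2*t - 2) v" for v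
    using tensor_poly_moment_prod_list[of "[2, 2*t - 2]" "2*t" v] assms(1) by simp
  have "sos t (\<lambda>v. moment_poly 2 v * moment_poly (2*t - 2) v - (\<Prod>k\<leftarrow>ids. moment_poly k v))"
    using sos_moment_prod_le[where N="length ids" and i="(!) ids"] assms(5,6)
    by (simp add: prod_list_map_eq_prod_nth sum.list_conv_set_nth atLeast0LessThan)
  then show ?thesis
    unfolding top[symmetric] tensor_poly_moment_prod_list[OF assms(5), symmetric] by (rule sos_le_2tI)
qed

end
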